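(* Let $u$ be the solution of the Cauchy problem in the context, and assume $m_1=0$ and $m_0\ge\sigma/f_0$. Then $\lim_{t\to+\infty}u(x,t)=1$ for every $x\in[0,1]$. Moreover, for all $x\in[0,1]$ and $t\ge0$, \[ 1\ge u(x,t)\ge1-\frac{1-x}{1+\frac{\sigma(1-x)}{m_0f_0-\sigma}\big(e^{(m_0f_0-\sigma)t}-1\big)}\quad\text{if } m_0>\sigma/f_0, \] \[ 1\ge u(x,t)\ge1-\frac{1-x}{1+\sigma(1-x)t}\quad\text{if } m_0=\sigma/f_0. \]
   Context: Constants: $f_0>0$, $f_1\ge0$ with $\sigma=f_0-f_1>0$; $\lambda_0,\lambda_1\ge0$; $\gamma_0,\gamma_1\in(0,1]$; $m_0=\lambda_0\gamma_0$, $m_1=\lambda_1\gamma_1$. With $\mathcal{J}_0u(x,t)=u(x+\gamma_0(1-x),t)-u(x,t)$ and $\mathcal{J}_1u(x,t)=u(x-\gamma_1x,t)-u(x,t)$, $u$ is the unique (mild) solution, which is $C^\infty$ on $[0,1]\times[0,\infty)$, of \[ \partial_tu+\sigma(1-x)x\,\partial_xu=\lambda_0f_0\mathcal{J}_0u+\lambda_1f_1\mathcal{J}_1u\ (0\le x\le1,\ t>0),\quad u(x,0)=x. \] *)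

theory Defs
  imports "HOL-Analysis.Analysis"
begin

end

theory Submission
  imports Defs
begin

text \<open>With \<open>m\<^sub>1 = 0\<close> the equation reads \<open>u\<^sub>t + \<sigma> (1 - x) x u\<^sub>x = K (u (x + \<gamma> (1 - x)) - u)\<close>
  with \<open>K = \<lambda>\<^sub>0 f\<^sub>0\<close>, \<open>\<gamma> = \<gamma>\<^sub>0\<close>. Its jump term is monotone, so a comparison principle holds on the
  strip \<open>[0,1] \<times> [0,\<infinity>)\<close>: at the first time a strict subsolution reaches zero, at a spatial
  maximum, the time derivative and the drift term are nonnegative while the jump term is nonpositive.
  Comparing \<open>u\<close> with the constant \<open>1\<close> gives \<open>u \<le> 1\<close>. For the lower bound, compare with the barrier
  \<open>w = 1 - (1 - x) / (A + (1 - x) B)\<close>, where \<open>A = e\<^bsup>a t\<^esup>\<close>, \<open>B' = \<sigma> A\<close>, \<open>B(0) = 0\<close> and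
  \<open>a = K \<gamma> - \<sigma>\<close>: it is a subsolution because the jump term is controlled by the concavity
  of \<open>z \<mapsto> z / (A + z B)\<close>. The hypothesis \<open>m\<^sub>0 \<ge> \<sigma> / f\<^sub>0\<close> means \<open>a \<ge> 0\<close>, hence \<open>B t \<ge> \<sigma> t\<close>,
  and the barrier tends to \<open>1\<close>.\<close>

definition has_partials_on_strip ::
    "(real \<Rightarrow> real \<Rightarrow> real) \<Rightarrow> (real \<Rightarrow> real \<Rightarrow> real) \<Rightarrow> (real \<Rightarrow> real \<Rightarrow> real) \<Rightarrow> bool" where
  "has_partials_on_strip E E_x E_t \<longleftrightarrow> (\<forall>x\<in>{0..1}. \<forall>t\<ge>0.
     ((\<lambda>(y, s). E y s) has_derivative (\<lambda>(h, k). E_x x t * h + E_t x t * k))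
       (at (x, t) within {0..1} \<times> {0..}))"

lemma has_partials_on_stripD:
  assumes "has_partials_on_strip E E_x E_t" "x \<in> {0..1}" "t \<ge> 0"
  shows "((\<lambda>(y, s). E y s) has_derivative (\<lambda>(h, k). E_x x t * h + E_t x t * k))
           (at (x, t) within {0..1} \<times> {0..})"
  using assms unfolding has_partials_on_strip_def by blast

lemma has_partials_on_strip_diff:
  assumes "has_partials_on_strip E E_x E_t" "has_partials_on_strip F F_x F_t"
  shows "has_partials_on_strip (\<lambda>y s. E y s - F y s) (\<lambda>y s. E_x y s - F_x y s) (\<lambda>y s. E_t y s - F_t y s)"
  unfolding has_partials_on_strip_def
proof (intro ballI allI impI)
  fix x t :: real assume "x \<in> {0..1}" "t \<ge> 0"
  from has_derivative_diff[OF has_partials_on_stripD[OF assms(1) this] has_partials_on_stripD[OF assms(2) this]]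
  show "((\<lambda>(y, s). E y s - F y s) has_derivative
          (\<lambda>(h, k). (E_x x t - F_x x t) * h + (E_t x t - F_t x t) * k)) (at (x, t) within {0..1} \<times> {0..})"
    by (simp add: case_prod_beta' algebra_simps)
qed

lemma has_partials_on_strip_time_only:
  assumes "\<And>s. (\<phi> has_real_derivative \<phi>' s) (at s)"
  shows "has_partials_on_strip (\<lambda>_ s. \<phi> s) (\<lambda>_ _. 0) (\<lambda>_ s. \<phi>' s)"
  unfolding has_partials_on_strip_def
proof (intro ballI allI impI)
  fix x t :: real
  have "((\<lambda>p. \<phi> (snd p)) has_derivative (\<lambda>p. \<phi>' t * snd p)) (at (x, t) within {0..1} \<times> {0..})"
    using has_derivative_compose[OF has_derivative_snd[OF has_derivative_ident]
        assms[of "snd (x, t)", unfolded has_field_derivative_def]]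
    by (simp add: mult.commute)
  then show "((\<lambda>(y, s). \<phi> s) has_derivative (\<lambda>(h, k). 0 * h + \<phi>' t * k))
               (at (x, t) within {0..1} \<times> {0..})"
    by (simp add: case_prod_beta')
qed

lemma has_partials_on_strip_const: "has_partials_on_strip (\<lambda>_ _. c) (\<lambda>_ _. 0) (\<lambda>_ _. 0)"
  using has_partials_on_strip_time_only[of "\<lambda>_. c" "\<lambda>_. 0"] by simp

lemma has_partials_on_strip_imp_continuous:
  assumes "has_partials_on_strip E E_x E_t"
  shows "continuous_on ({0..1} \<times> {0..}) (\<lambda>(y, s). E y s)"
  unfolding continuous_on_eq_continuous_within
proof
  fix q :: "real \<times> real" assume "q \<in> {0..1} \<times> {0..}"
  then obtain x t where "q = (x, t)" "x \<in> {0..1}" "t \<ge> 0" by auto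
  then show "continuous (at q within {0..1} \<times> {0..}) (\<lambda>(y, s). E y s)"
    using has_derivative_continuous[OF has_partials_on_stripD[OF assms]] by blast
qed

lemma has_partials_on_strip_imp_time_deriv:
  assumes "has_partials_on_strip E E_x E_t" "x \<in> {0..1}" "t \<ge> 0"
  shows "((\<lambda>s. E x s) has_real_derivative E_t x t) (at t within {0..})"
proof -
  have "((\<lambda>s. (x, s)) has_derivative (\<lambda>k. (0, k))) (at t within {0..})"
    by (auto intro!: derivative_eq_intros)
  from has_derivative_in_compose[OF this has_derivative_subset[OF has_partials_on_stripD[OF assms]]]
  show ?thesis using assms(2) by (force simp: has_field_derivative_def mult_commute_abs)
qed

lemma has_partials_on_strip_imp_space_deriv:
  assumes "has_partials_on_strip E E_x E_t" "x \<in> {0..1}" "t \<ge> 0"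
  shows "((\<lambda>y. E y t) has_real_derivative E_x x t) (at x within {0..1})"
proof -
  have "((\<lambda>y. (y, t)) has_derivative (\<lambda>h. (h, 0))) (at x within {0..1})"
    by (auto intro!: derivative_eq_intros)
  from has_derivative_in_compose[OF this has_derivative_subset[OF has_partials_on_stripD[OF assms]]]
  show ?thesis using assms(3) by (auto simp: has_field_derivative_def mult_commute_abs)
qed

lemma has_real_derivative_nonneg_at_left_max:
  fixes f :: "real \<Rightarrow> real"
  assumes d: "(f has_real_derivative d) (at t within {a..t})" and "a < t"
    and le: "\<And>s. a \<le> s \<Longrightarrow> s < t \<Longrightarrow> f s \<le> f t"
  shows "d \<ge> 0"
proof (rule tendsto_lowerbound)
  show "((\<lambda>y. (f y - f t) / (y - t)) \<longlongrightarrow> d) (at_left t)"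
    using d unfolding has_field_derivative_iff at_within_Icc_at_left[OF \<open>a < t\<close>] by simp
  show "\<forall>\<^sub>F y in at_left t. 0 \<le> (f y - f t) / (y - t)"
    using eventually_at_left_real[OF \<open>a < t\<close>]
    by eventually_elim (auto intro!: divide_nonpos_neg simp: le)
qed (simp add: trivial_limit_at_left_real)

lemma strip_first_nonneg_time:
  fixes E :: "real \<Rightarrow> real \<Rightarrow> real"
  assumes cont: "continuous_on ({0..1} \<times> {0..}) (\<lambda>(y, s). E y s)"
    and init: "\<And>y. y \<in> {0..1} \<Longrightarrow> E y 0 < 0"
    and x: "x \<in> {0..1}" and t: "t \<ge> 0" and nonneg: "E x t \<ge> 0"
  obtains x' t' where "x' \<in> {0..1}" "t' > 0" "E x' t' \<ge> 0"
    "\<And>y. y \<in> {0..1} \<Longrightarrow> E y t' \<le> E x' t'" "\<And>s. 0 \<le> s \<Longrightarrow> s < t' \<Longrightarrow> E x' s < 0"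
proof -
  define R where "R = {0..1::real} \<times> {0..t}"
  define N where "N = R \<inter> (\<lambda>(y, s). E y s) -` {0..}"
  have "closed N" unfolding N_def R_def
    by (rule continuous_closed_preimage[OF continuous_on_subset[OF cont]]) (auto intro: closed_Times)
  then have "compact (R \<inter> N)" unfolding R_def by (intro compact_Int_closed compact_Times compact_Icc)
  moreover have "R \<inter> N = N" by (auto simp: N_def)
  ultimately have "compact N" by simp
  moreover have "(x, t) \<in> N" using x t nonneg by (auto simp: N_def R_def)
  ultimately obtain p where p: "p \<in> N" and first: "\<And>q. q \<in> N \<Longrightarrow> snd p \<le> snd q"
    using continuous_attains_inf[OF _ _ continuous_on_snd[OF continuous_on_id], of N] by blast
  obtain y0 t' where p_eq: "p = (y0, t')" by (cases p)
  have y0: "y0 \<in> {0..1}" and t': "0 \<le> t'" "t' \<le> t" and "E y0 t' \<ge> 0"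
    using p by (auto simp: N_def R_def p_eq)
  have "t' \<noteq> 0" using init[OF y0] \<open>E y0 t' \<ge> 0\<close> by auto
  have slice: "continuous_on {0..1} (\<lambda>y. E y t')"
    by (rule continuous_on_compose2[OF cont, of _ "\<lambda>y. (y, t')", simplified])
      (use t' in \<open>auto intro!: continuous_intros\<close>)
  obtain x' where x': "x' \<in> {0..1}" and max: "\<And>y. y \<in> {0..1} \<Longrightarrow> E y t' \<le> E x' t'"
    using continuous_attains_sup[OF compact_Icc _ slice] by fastforce
  have "E x' s < 0" if "0 \<le> s" "s < t'" for s
  proof (rule ccontr)
    assume "\<not> E x' s < 0"
    then have "(x', s) \<in> N" using x' that t' by (auto simp: N_def R_def)
    from first[OF this] that show False by (simp add: p_eq)
  qed
  moreover have "E x' t' \<ge> 0" using max[OF y0] \<open>E y0 t' \<ge> 0\<close> by linarith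
  ultimately show ?thesis using that[OF x' _ _ max] t' \<open>t' \<noteq> 0\<close> by simp
qed

lemma strip_maximum_principle_strict:
  fixes E :: "real \<Rightarrow> real \<Rightarrow> real" and c K :: real and g :: "real \<Rightarrow> real"
  assumes E: "has_partials_on_strip E E_x E_t"
    and "c \<ge> 0" "K \<ge> 0" and g: "\<And>y. y \<in> {0..1} \<Longrightarrow> g y \<in> {0..1}"
    and sub: "\<And>y s. y \<in> {0..1} \<Longrightarrow> s > 0 \<Longrightarrow>
      E_t y s + c * (1 - y) * y * E_x y s < K * (E (g y) s - E y s)"
    and init: "\<And>y. y \<in> {0..1} \<Longrightarrow> E y 0 < 0"
    and x: "x \<in> {0..1}" and t: "t \<ge> 0"
  shows "E x t < 0"
proof (rule ccontr)
  assume "\<not> E x t < 0"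
  then have "E x t \<ge> 0" by simp
  then obtain x' t' where x': "x' \<in> {0..1}" and "t' > 0" "E x' t' \<ge> 0"
    and max: "\<And>y. y \<in> {0..1} \<Longrightarrow> E y t' \<le> E x' t'"
    and before: "\<And>s. 0 \<le> s \<Longrightarrow> s < t' \<Longrightarrow> E x' s < 0"
    using strip_first_nonneg_time[OF has_partials_on_strip_imp_continuous[OF E] init x t] by blast
  have "E_t x' t' \<ge> 0"
  proof (rule has_real_derivative_nonneg_at_left_max)
    show "((\<lambda>s. E x' s) has_real_derivative E_t x' t') (at t' within {0..t'})"
      by (rule has_field_derivative_subset[OF has_partials_on_strip_imp_time_deriv[OF E x']])
        (use \<open>t' > 0\<close> in auto)
  next
    fix s assume "0 \<le> s" "s < t'"
    then show "E x' s \<le> E x' t'" using before \<open>E x' t' \<ge> 0\<close> by fastforce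
  qed (use \<open>t' > 0\<close> in simp)
  moreover have "c * (1 - x') * x' * E_x x' t' \<ge> 0"
  proof (cases "x' = 0")
    case False
    have "E_x x' t' \<ge> 0"
    proof (rule has_real_derivative_nonneg_at_left_max)
      show "((\<lambda>y. E y t') has_real_derivative E_x x' t') (at x' within {0..x'})"
        by (rule has_field_derivative_subset[OF has_partials_on_strip_imp_space_deriv[OF E x']])
          (use \<open>t' > 0\<close> x' in auto)
    qed (use False x' max in auto)
    then show ?thesis using \<open>c \<ge> 0\<close> x' by simp
  qed simp
  moreover have "K * (E (g x') t' - E x' t') \<le> 0"
    using \<open>K \<ge> 0\<close> max[OF g[OF x']] by (simp add: mult_nonneg_nonpos)
  ultimately show False using sub[OF x' \<open>t' > 0\<close>] by linarith
qed

text \<open>Reduction to the strict case: subtract \<open>\<epsilon> (1 + t)\<close> with \<open>\<epsilon>\<close> small.\<close>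

lemma strip_maximum_principle:
  fixes E :: "real \<Rightarrow> real \<Rightarrow> real" and c K :: real and g :: "real \<Rightarrow> real"
  assumes E: "has_partials_on_strip E E_x E_t"
    and "c \<ge> 0" "K \<ge> 0" and g: "\<And>y. y \<in> {0..1} \<Longrightarrow> g y \<in> {0..1}"
    and sub: "\<And>y s. y \<in> {0..1} \<Longrightarrow> s > 0 \<Longrightarrow>
      E_t y s + c * (1 - y) * y * E_x y s \<le> K * (E (g y) s - E y s)"
    and init: "\<And>y. y \<in> {0..1} \<Longrightarrow> E y 0 \<le> 0"
    and x: "x \<in> {0..1}" and t: "t \<ge> 0"
  shows "E x t \<le> 0"
proof (rule ccontr)
  assume "\<not> E x t \<le> 0"
  define \<epsilon> where "\<epsilon> = E x t / (2 * (1 + t))"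
  have "\<epsilon> > 0" using \<open>\<not> E x t \<le> 0\<close> t by (simp add: \<epsilon>_def)
  have "has_partials_on_strip (\<lambda>_ s. \<epsilon> * (1 + s)) (\<lambda>_ _. 0) (\<lambda>_ _. \<epsilon>)"
    by (rule has_partials_on_strip_time_only) (auto intro!: derivative_eq_intros)
  then have "E x t - \<epsilon> * (1 + t) < 0"
  proof (rule strip_maximum_principle_strict[OF has_partials_on_strip_diff[OF E]])
    fix y s :: real assume "y \<in> {0..1}" "s > 0"
    then show "E_t y s - \<epsilon> + c * (1 - y) * y * (E_x y s - 0)
        < K * (E (g y) s - \<epsilon> * (1 + s) - (E y s - \<epsilon> * (1 + s)))"
      using sub \<open>\<epsilon> > 0\<close> by fastforce
  next
    fix y :: real assume "y \<in> {0..1}"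
    then show "E y 0 - \<epsilon> * (1 + 0) < 0" using init \<open>\<epsilon> > 0\<close> by fastforce
  qed (use assms(2-4) x t in auto)
  moreover have "\<epsilon> * (1 + t) = E x t / 2" using t by (simp add: \<epsilon>_def field_simps)
  ultimately show False using \<open>\<not> E x t \<le> 0\<close> by simp
qed

lemma strip_comparison_principle:
  fixes w v :: "real \<Rightarrow> real \<Rightarrow> real" and c K :: real and g :: "real \<Rightarrow> real"
  assumes w: "has_partials_on_strip w w_x w_t" and v: "has_partials_on_strip v v_x v_t"
    and "c \<ge> 0" "K \<ge> 0" and g: "\<And>y. y \<in> {0..1} \<Longrightarrow> g y \<in> {0..1}"
    and sub: "\<And>y s. y \<in> {0..1} \<Longrightarrow> s > 0 \<Longrightarrow>
      w_t y s + c * (1 - y) * y * w_x y s \<le> K * (w (g y) s - w y s)"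
    and super: "\<And>y s. y \<in> {0..1} \<Longrightarrow> s > 0 \<Longrightarrow>
      v_t y s + c * (1 - y) * y * v_x y s \<ge> K * (v (g y) s - v y s)"
    and init: "\<And>y. y \<in> {0..1} \<Longrightarrow> w y 0 \<le> v y 0"
    and x: "x \<in> {0..1}" and t: "t \<ge> 0"
  shows "w x t \<le> v x t"
proof -
  have "w x t - v x t \<le> 0"
  proof (rule strip_maximum_principle[OF has_partials_on_strip_diff[OF w v] assms(3-5) _ _ x t])
    fix y s :: real assume "y \<in> {0..1}" "s > 0"
    from sub[OF this] super[OF this]
    show "w_t y s - v_t y s + c * (1 - y) * y * (w_x y s - v_x y s) \<le> K * (w (g y) s - v (g y) s - (w y s - v y s))"
      by (simp add: algebra_simps)
  next
    fix y :: real assume "y \<in> {0..1}"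
    from init[OF this] show "w y 0 - v y 0 \<le> 0" by simp
  qed
  then show ?thesis by simp
qed

lemma has_partials_on_strip_barrier:
  fixes A B A' B' :: "real \<Rightarrow> real"
  assumes dA: "\<And>s. (A has_real_derivative A' s) (at s)"
    and dB: "\<And>s. (B has_real_derivative B' s) (at s)"
    and pos: "\<And>y s. y \<in> {0..1} \<Longrightarrow> s \<ge> 0 \<Longrightarrow> A s + (1 - y) * B s > 0"
  shows "has_partials_on_strip (\<lambda>y s. 1 - (1 - y) / (A s + (1 - y) * B s))
    (\<lambda>y s. A s / (A s + (1 - y) * B s)\<^sup>2)
    (\<lambda>y s. (1 - y) * (A' s + (1 - y) * B' s) / (A s + (1 - y) * B s)\<^sup>2)"
  unfolding has_partials_on_strip_def
proof (intro ballI allI impI)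
  fix x t :: real assume xt: "x \<in> {0..1}" "t \<ge> 0"
  let ?S = "{0..1::real} \<times> {0::real..}"
  define Q where "Q = A t + (1 - x) * B t"
  have "Q \<noteq> 0" using pos[OF xt] by (simp add: Q_def)
  have time: "((\<lambda>p. F (snd p)) has_derivative (\<lambda>p. F' t * snd p)) (at (x, t) within ?S)"
    if "\<And>s. (F has_real_derivative F' s) (at s)" for F F' :: "real \<Rightarrow> real"
    using has_derivative_compose[OF has_derivative_snd[OF has_derivative_ident]
        that[of "snd (x, t)", unfolded has_field_derivative_def]]
    by (simp add: mult.commute)
  have space: "((\<lambda>p::real \<times> real. 1 - fst p) has_derivative (\<lambda>p. 0 - fst p)) (at (x, t) within ?S)"
    by (intro has_derivative_diff has_derivative_const has_derivative_fst has_derivative_ident)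
  have "((\<lambda>p. 1 - (1 - fst p) / (A (snd p) + (1 - fst p) * B (snd p))) has_derivative
      (\<lambda>p. A t / Q\<^sup>2 * fst p + (1 - x) * (A' t + (1 - x) * B' t) / Q\<^sup>2 * snd p))
      (at (x, t) within ?S)"
  proof (rule has_derivative_eq_rhs[OF has_derivative_diff[OF has_derivative_const has_derivative_divide'[OF space
        has_derivative_add[OF time[OF dA] has_derivative_mult[OF space time[OF dB]]]]]])
    show "A (snd (x, t)) + (1 - fst (x, t)) * B (snd (x, t)) \<noteq> 0"
      using \<open>Q \<noteq> 0\<close> by (simp add: Q_def)
  qed (simp only: prod.sel Q_def[symmetric],
      simp add: fun_eq_iff power2_eq_square field_simps \<open>Q \<noteq> 0\<close>, simp add: Q_def algebra_simps)
  then show "((\<lambda>(y, s). 1 - (1 - y) / (A s + (1 - y) * B s)) has_derivative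
      (\<lambda>(h, k). A t / (A t + (1 - x) * B t)\<^sup>2 * h
         + (1 - x) * (A' t + (1 - x) * B' t) / (A t + (1 - x) * B t)\<^sup>2 * k))
      (at (x, t) within ?S)"
    by (simp only: case_prod_beta' Q_def)
qed

text \<open>Concavity of \<open>z \<mapsto> z / (A + z B)\<close>: the chord over \<open>[(1 - \<gamma>) z, z]\<close> is at least
  \<open>\<gamma> z\<close> times the slope \<open>A / (A + z B)\<^sup>2\<close> at the right end.\<close>

lemma linear_fractional_chord_ge:
  fixes A B z K \<gamma> :: real
  assumes "A > 0" "B \<ge> 0" "z \<ge> 0" "K \<ge> 0" "0 \<le> \<gamma>" "\<gamma> \<le> 1"
  shows "z * A * (K * \<gamma>) / (A + z * B)\<^sup>2 \<le> K * (z / (A + z * B) - (1 - \<gamma>) * z / (A + (1 - \<gamma>) * z * B))"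
proof -
  define Q Q' where "Q = A + z * B" and "Q' = A + (1 - \<gamma>) * z * B"
  have "(1 - \<gamma>) * z * B \<le> z * B"
    using assms by (simp add: mult_right_mono mult_left_le_one_le)
  then have "0 < Q'" "Q' \<le> Q" using assms by (simp_all add: Q_def Q'_def add_pos_nonneg)
  have "z * A * (K * \<gamma>) / Q\<^sup>2 \<le> z * A * (K * \<gamma>) / (Q * Q')"
    using \<open>0 < Q'\<close> \<open>Q' \<le> Q\<close> assms
    by (auto simp: power2_eq_square intro!: divide_left_mono mult_left_mono mult_nonneg_nonneg)
  also have "\<dots> = K * (z / Q - (1 - \<gamma>) * z / Q')"
    using \<open>0 < Q'\<close> \<open>Q' \<le> Q\<close> by (simp add: Q_def Q'_def field_simps)
  finally show ?thesis by (simp add: Q_def Q'_def)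
qed

lemma barrier_subsolution_inequality:
  fixes A B a \<sigma> K \<gamma> y :: real
  assumes "A > 0" "B \<ge> 0" "y \<in> {0..1}" "K \<ge> 0" "0 \<le> \<gamma>" "\<gamma> \<le> 1" and rate: "a + \<sigma> = K * \<gamma>"
  shows "(1 - y) * (a * A + (1 - y) * (\<sigma> * A)) / (A + (1 - y) * B)\<^sup>2
      + \<sigma> * (1 - y) * y * (A / (A + (1 - y) * B)\<^sup>2)
    \<le> K * (1 - (1 - (y + \<gamma> * (1 - y))) / (A + (1 - (y + \<gamma> * (1 - y))) * B)
      - (1 - (1 - y) / (A + (1 - y) * B)))"
proof -
  have jump: "1 - (y + \<gamma> * (1 - y)) = (1 - \<gamma>) * (1 - y)" by (simp add: algebra_simps)
  have "(1 - y) * (a * A + (1 - y) * (\<sigma> * A)) + \<sigma> * (1 - y) * y * A = (1 - y) * A * (K * \<gamma>)"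
    unfolding rate[symmetric] by (simp add: algebra_simps)
  then have "(1 - y) * (a * A + (1 - y) * (\<sigma> * A)) / (A + (1 - y) * B)\<^sup>2
      + \<sigma> * (1 - y) * y * (A / (A + (1 - y) * B)\<^sup>2) = (1 - y) * A * (K * \<gamma>) / (A + (1 - y) * B)\<^sup>2"
    by (simp add: add_divide_distrib[symmetric])
  also have "\<dots> \<le> K * ((1 - y) / (A + (1 - y) * B) - (1 - \<gamma>) * (1 - y) / (A + (1 - \<gamma>) * (1 - y) * B))"
    using assms by (intro linear_fractional_chord_ge) auto
  finally show ?thesis unfolding jump by (simp add: algebra_simps)
qed

lemma affine_jump_in_unit_interval:
  fixes y \<gamma> :: real
  assumes "y \<in> {0..1}" "0 \<le> \<gamma>" "\<gamma> \<le> 1"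
  shows "y + \<gamma> * (1 - y) \<in> {0..1}"
proof -
  have "\<gamma> * (1 - y) \<le> 1 * (1 - y)" using assms by (intro mult_right_mono) auto
  then show ?thesis using assms by auto
qed

locale jump_transport_solution =
  fixes \<sigma> K \<gamma> :: real and u u_x u_t :: "real \<Rightarrow> real \<Rightarrow> real"
  assumes partials: "has_partials_on_strip u u_x u_t"
    and pde: "\<And>y s. y \<in> {0..1} \<Longrightarrow> s > 0 \<Longrightarrow>
      u_t y s + \<sigma> * (1 - y) * y * u_x y s = K * (u (y + \<gamma> * (1 - y)) s - u y s)"
    and init: "\<And>y. y \<in> {0..1} \<Longrightarrow> u y 0 = y"
    and \<sigma>_nonneg: "\<sigma> \<ge> 0" and K_nonneg: "K \<ge> 0" and \<gamma>_nonneg: "0 \<le> \<gamma>" and \<gamma>_le_one: "\<gamma> \<le> 1"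
begin

lemma comparison:
  assumes "has_partials_on_strip w w_x w_t" "has_partials_on_strip v v_x v_t"
    and "\<And>y s. y \<in> {0..1} \<Longrightarrow> s > 0 \<Longrightarrow>
      w_t y s + \<sigma> * (1 - y) * y * w_x y s \<le> K * (w (y + \<gamma> * (1 - y)) s - w y s)"
    and "\<And>y s. y \<in> {0..1} \<Longrightarrow> s > 0 \<Longrightarrow>
      v_t y s + \<sigma> * (1 - y) * y * v_x y s \<ge> K * (v (y + \<gamma> * (1 - y)) s - v y s)"
    and "\<And>y. y \<in> {0..1} \<Longrightarrow> w y 0 \<le> v y 0" "x \<in> {0..1}" "t \<ge> 0"
  shows "w x t \<le> v x t"
  by (rule strip_comparison_principle[OF assms(1,2) \<sigma>_nonneg K_nonneg
        affine_jump_in_unit_interval[OF _ \<gamma>_nonneg \<gamma>_le_one] assms(3-7)])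

lemma le_one:
  assumes "x \<in> {0..1}" "t \<ge> 0"
  shows "u x t \<le> 1"
  using comparison[OF partials has_partials_on_strip_const _ _ _ assms] pde init by simp

lemma barrier_le:
  fixes B :: "real \<Rightarrow> real" and a :: real
  assumes rate: "a + \<sigma> = K * \<gamma>"
    and dB: "\<And>s. (B has_real_derivative \<sigma> * exp (a * s)) (at s)" and "B 0 = 0"
    and x: "x \<in> {0..1}" and t: "t \<ge> 0"
  shows "1 - (1 - x) / (exp (a * t) + (1 - x) * B t) \<le> u x t"
proof -
  have B_nonneg: "B s \<ge> 0" if "s \<ge> 0" for s
  proof -
    have "B 0 \<le> B s"
      using dB \<sigma>_nonneg by (intro DERIV_nonneg_imp_nondecreasing[OF that]) (blast intro: mult_nonneg_nonneg exp_ge_zero)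
    with \<open>B 0 = 0\<close> show ?thesis by simp
  qed
  have dA: "((\<lambda>s. exp (a * s)) has_real_derivative a * exp (a * s)) (at s)" for s
    by (auto intro!: derivative_eq_intros)
  have barrier: "has_partials_on_strip (\<lambda>y s. 1 - (1 - y) / (exp (a * s) + (1 - y) * B s))
      (\<lambda>y s. exp (a * s) / (exp (a * s) + (1 - y) * B s)\<^sup>2)
      (\<lambda>y s. (1 - y) * (a * exp (a * s) + (1 - y) * (\<sigma> * exp (a * s))) / (exp (a * s) + (1 - y) * B s)\<^sup>2)"
    by (rule has_partials_on_strip_barrier[OF dA dB]) (simp add: B_nonneg add_pos_nonneg)
  show ?thesis
  proof (rule comparison[OF barrier partials _ _ _ x t])
    fix y s :: real assume "y \<in> {0..1}" "s > 0"
    then show "(1 - y) * (a * exp (a * s) + (1 - y) * (\<sigma> * exp (a * s))) / (exp (a * s) + (1 - y) * B s)\<^sup>2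
        + \<sigma> * (1 - y) * y * (exp (a * s) / (exp (a * s) + (1 - y) * B s)\<^sup>2)
      \<le> K * (1 - (1 - (y + \<gamma> * (1 - y))) / (exp (a * s) + (1 - (y + \<gamma> * (1 - y))) * B s)
        - (1 - (1 - y) / (exp (a * s) + (1 - y) * B s)))"
      using B_nonneg K_nonneg \<gamma>_nonneg \<gamma>_le_one rate by (intro barrier_subsolution_inequality) auto
  qed (use pde init \<open>B 0 = 0\<close> in auto)
qed

lemma lower_bound_exponential:
  assumes "K * \<gamma> > \<sigma>" "x \<in> {0..1}" "t \<ge> 0"
  defines "a \<equiv> K * \<gamma> - \<sigma>"
  shows "1 - (1 - x) / (1 + \<sigma> * (1 - x) / a * (exp (a * t) - 1)) \<le> u x t"
proof -
  have "a > 0" using assms by (simp add: a_def)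
  define B where "B s = \<sigma> * (exp (a * s) - 1) / a" for s
  have dB: "(B has_real_derivative \<sigma> * exp (a * s)) (at s)" for s
    unfolding B_def using \<open>a > 0\<close> by (auto intro!: derivative_eq_intros)
  have barrier: "1 - (1 - x) / (exp (a * t) + (1 - x) * B t) \<le> u x t"
    by (rule barrier_le[OF _ dB]) (use assms in \<open>auto simp: a_def B_def\<close>)
  have "(1 - x) * B t \<ge> 0" using \<open>a > 0\<close> \<open>x \<in> {0..1}\<close> \<open>t \<ge> 0\<close> \<sigma>_nonneg by (simp add: B_def)
  then have "(1 - x) / (exp (a * t) + (1 - x) * B t) \<le> (1 - x) / (1 + (1 - x) * B t)"
    using \<open>x \<in> {0..1}\<close> \<open>a > 0\<close> \<open>t \<ge> 0\<close> by (intro frac_le) auto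
  moreover have "(1 - x) * B t = \<sigma> * (1 - x) / a * (exp (a * t) - 1)"
    by (simp add: B_def)
  ultimately show ?thesis using barrier by simp
qed

lemma lower_bound_critical:
  assumes "K * \<gamma> = \<sigma>" "x \<in> {0..1}" "t \<ge> 0"
  shows "1 - (1 - x) / (1 + \<sigma> * (1 - x) * t) \<le> u x t"
proof -
  have dB: "((\<lambda>s. \<sigma> * s) has_real_derivative \<sigma> * exp (0 * s)) (at s)" for s
    by (auto intro!: derivative_eq_intros)
  have "1 - (1 - x) / (exp (0 * t) + (1 - x) * (\<sigma> * t)) \<le> u x t"
    by (rule barrier_le[OF _ dB _ assms(2,3)]) (use assms(1) in auto)
  then show ?thesis by (simp add: mult.assoc mult.left_commute)
qed

lemma lower_bound_hyperbolic:
  assumes "K * \<gamma> \<ge> \<sigma>" "x \<in> {0..1}" "t \<ge> 0"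
  shows "1 - (1 - x) / (1 + \<sigma> * (1 - x) * t) \<le> u x t"
proof (cases "K * \<gamma> = \<sigma>")
  case False
  define a where "a = K * \<gamma> - \<sigma>"
  have "a > 0" using assms False by (simp add: a_def)
  have "a * t \<le> exp (a * t) - 1" using exp_ge_add_one_self[of "a * t"] by linarith
  then have "\<sigma> * (1 - x) / a * (a * t) \<le> \<sigma> * (1 - x) / a * (exp (a * t) - 1)"
    using \<open>a > 0\<close> \<sigma>_nonneg assms(2) by (intro mult_left_mono) auto
  then have "\<sigma> * (1 - x) * t \<le> \<sigma> * (1 - x) / a * (exp (a * t) - 1)"
    using \<open>a > 0\<close> by simp
  moreover have "\<sigma> * (1 - x) * t \<ge> 0" using assms(2,3) \<sigma>_nonneg by simp
  ultimately have "(1 - x) / (1 + \<sigma> * (1 - x) / a * (exp (a * t) - 1)) \<le> (1 - x) / (1 + \<sigma> * (1 - x) * t)"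
    using assms(2) by (intro frac_le) auto
  with lower_bound_exponential[of x t] assms False show ?thesis by (simp add: a_def)
qed (use lower_bound_critical assms in blast)


lemma tendsto_one:
  assumes "\<sigma> > 0" "K * \<gamma> \<ge> \<sigma>" "x \<in> {0..1}"
  shows "((\<lambda>t. u x t) \<longlongrightarrow> 1) at_top"
proof (rule tendsto_sandwich[of "\<lambda>t. 1 - (1 - x) / (1 + \<sigma> * (1 - x) * t)" _ _ "\<lambda>_. 1"])
  show "\<forall>\<^sub>F t in at_top. 1 - (1 - x) / (1 + \<sigma> * (1 - x) * t) \<le> u x t"
    using lower_bound_hyperbolic[OF assms(2,3)] by (auto simp: eventually_at_top_linorder)
  show "\<forall>\<^sub>F t in at_top. u x t \<le> 1"
    using le_one[OF assms(3)] by (auto simp: eventually_at_top_linorder)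
  show "((\<lambda>t. 1 - (1 - x) / (1 + \<sigma> * (1 - x) * t)) \<longlongrightarrow> 1) at_top"
  proof (cases "x = 1")
    case False
    then have "\<sigma> * (1 - x) > 0" using assms by simp
    then have "filterlim (\<lambda>t. 1 + \<sigma> * (1 - x) * t) at_top at_top"
      by (intro filterlim_tendsto_add_at_top[OF tendsto_const]
          filterlim_tendsto_pos_mult_at_top[OF tendsto_const _ filterlim_ident])
    then have "((\<lambda>t. (1 - x) / (1 + \<sigma> * (1 - x) * t)) \<longlongrightarrow> 0) at_top"
      by (intro tendsto_divide_0[OF tendsto_const] filterlim_at_top_imp_at_infinity)
    then show ?thesis using tendsto_diff[OF tendsto_const, of _ 0 at_top 1] by simp
  qed simp
qed simp

end

theorem proposition4p9:
  fixes f0 f1 \<sigma> lam0 lam1 \<gamma>0 \<gamma>1 m0 m1 :: real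
    and u ux ut :: "real \<Rightarrow> real \<Rightarrow> real"
  assumes f0: "f0 > 0" and f1: "f1 \<ge> 0"
    and sigma: "\<sigma> = f0 - f1" "\<sigma> > 0"
    and lam: "lam0 \<ge> 0" "lam1 \<ge> 0"
    and gam0: "0 < \<gamma>0" "\<gamma>0 \<le> 1" and gam1: "0 < \<gamma>1" "\<gamma>1 \<le> 1"
    and m_def: "m0 = lam0 * \<gamma>0" "m1 = lam1 * \<gamma>1"
    and diff: "\<And>x t. x \<in> {0..1} \<Longrightarrow> t \<ge> 0 \<Longrightarrow>
        ((\<lambda>(y, s). u y s) has_derivative (\<lambda>(h, k). ux x t * h + ut x t * k))
          (at (x, t) within ({0..1} \<times> {0..}))"
    and cont: "continuous_on ({0..1} \<times> {0..}) (\<lambda>(x, t). ux x t)"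
              "continuous_on ({0..1} \<times> {0..}) (\<lambda>(x, t). ut x t)"
    and pde: "\<And>x t. x \<in> {0..1} \<Longrightarrow> t > 0 \<Longrightarrow>
        ut x t + \<sigma> * (1 - x) * x * ux x t =
          lam0 * f0 * (u (x + \<gamma>0 * (1 - x)) t - u x t) + lam1 * f1 * (u (x - \<gamma>1 * x) t - u x t)"
    and init: "\<And>x. x \<in> {0..1} \<Longrightarrow> u x 0 = x"
    and m1_zero: "m1 = 0"
    and m0_ge: "m0 \<ge> \<sigma> / f0"
  shows "(\<forall>x\<in>{0..1}. ((\<lambda>t. u x t) \<longlongrightarrow> 1) at_top)
    \<and> (m0 > \<sigma> / f0 \<longrightarrow> (\<forall>x\<in>{0..1}. \<forall>t\<ge>0.
          1 \<ge> u x t \<and>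
          u x t \<ge> 1 - (1 - x) / (1 + \<sigma> * (1 - x) / (m0 * f0 - \<sigma>) * (exp ((m0 * f0 - \<sigma>) * t) - 1))))
    \<and> (m0 = \<sigma> / f0 \<longrightarrow> (\<forall>x\<in>{0..1}. \<forall>t\<ge>0.
          1 \<ge> u x t \<and> u x t \<ge> 1 - (1 - x) / (1 + \<sigma> * (1 - x) * t)))"
proof -
  have "lam1 = 0" using m1_zero m_def(2) gam1(1) by simp
  interpret jump_transport_solution \<sigma> "lam0 * f0" \<gamma>0 u ux ut
  proof
    show "has_partials_on_strip u ux ut" using diff unfolding has_partials_on_strip_def by blast
  qed (use pde \<open>lam1 = 0\<close> init sigma lam f0 gam0 in auto)
  have rate: "lam0 * f0 * \<gamma>0 = m0 * f0" by (simp add: m_def)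
  have "\<sigma> \<le> m0 * f0" "m0 > \<sigma> / f0 \<longleftrightarrow> m0 * f0 > \<sigma>" "m0 = \<sigma> / f0 \<longleftrightarrow> m0 * f0 = \<sigma>"
    using m0_ge f0 by (auto simp: field_simps)
  then show ?thesis
    using tendsto_one le_one lower_bound_exponential lower_bound_critical sigma(2)
    unfolding rate by auto
qed

end
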